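(* Let $p,q$ be positive integers, with notation as in the context, and let $s$ be the integer with $T_{e_s}=2^sT_1$. Let $T_c$ be a positive integer which is either $1$ or of the form $T_c=2^{l_c}T_1$ with $0\le l_c\le s+1$, and define $$e_0=\begin{cases}\max(e_p,e_q) & \text{if } T_c=1;\\ e_{s,g}+1 & \text{if } l_c=0,\ T_1\ne 1;\\ e_{s,g}+2l_c-1 & \text{if } 1\le l_c\le s+1.\end{cases}$$ Then for every integer $e>e_0$, every point $(x,y)$ lying on a cycle of length $T_c$ of the Cat map over $\mathbb{Z}_{2^e}$ satisfies $x\equiv 0\pmod 2$ and $y\equiv 0\pmod 2$.
   Context: Let $\mathbf{C}=\begin{bmatrix}1 & p\\ q & 1+pq\end{bmatrix}$. The Cat map over $\mathbb{Z}_{2^e}$ is the bijection $v\mapsto \mathbf{C}v\bmod 2^e$ of $\mathbb{Z}_{2^e}^2$; a point lies on a cycle of length $n$ if $n$ is the least positive integer with $\mathbf{C}^n v\equiv v\pmod{2^e}$. $T_e$ denotes the least period of the Cat map over $\mathbb{Z}_{2^e}$ (least $n\ge1$ with $\mathbf{C}^n\equiv I\pmod{2^e}$). Put $A=pq+2$, $B=\sqrt{A^2-4}$, $G_n=\left(\frac{A+B}{2}\right)^n+\left(\frac{A-B}{2}\right)^n$, $H_n=\frac{1}{B}\left(\left(\frac{A+B}{2}\right)^n-\left(\frac{A-B}{2}\right)^n\right)$ (integers). For a nonzero integer $m$ let $v_2(m)$ be the largest $x$ with $2^x\mid m$. Let $e_p=v_2(p)$, $e_q=v_2(q)$; $T_1=3$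 if $p,q$ are both odd, $T_1=2$ if exactly one of $p,q$ is odd, $T_1=1$ if both are even; $\hat h=-1$ if $e_p+e_q=0$ and $\hat h=\min(e_p,e_q)$ otherwise; $e_{s,h}=v_2(H_{T_1})$; $m_0=1$ if $\frac12 G_{T_1}\not\equiv 1\pmod 4$ and $m_0=0$ otherwise; $e_{s,g}=v_2\left(\frac12 G_{2^{m_0}T_1}-1\right)$; $x_0=e_{s,h}+m_0+\hat h-e_{s,g}$ if $e_{s,g}<e_{s,h}+m_0+\hat h$ and $x_0=0$ otherwise; and $e_s=e_{s,h}+m_0+\hat h+x_0$. The cases defining $e_0$ are read in order. *)

theory Defs
  imports "HOL-Computational_Algebra.Primes" "HOL-Number_Theory.Cong"
begin

definition v2 :: "int \<Rightarrow> nat" where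
  "v2 m = multiplicity (2::int) m"

text \<open>The Cat map v \<mapsto> C v with C = [[1,p],[q,1+pq]], acting on integer pairs
  (representatives of points of Z_{2^e}^2).\<close>
definition cat_map :: "int \<Rightarrow> int \<Rightarrow> int \<times> int \<Rightarrow> int \<times> int" where
  "cat_map p q v = (fst v + p * snd v, q * fst v + (1 + p * q) * snd v)"

text \<open>2x2 integer matrices as quadruples (a,b,c,d) = [[a,b],[c,d]].\<close>
definition mat_mult2 :: "int \<times> int \<times> int \<times> int \<Rightarrow> int \<times> int \<times> int \<times> int \<Rightarrow> int \<times> int \<times> int \<times> int" where
  "mat_mult2 M N = (case M of (a,b,c,d) \<Rightarrow> case N of (a',b',c',d') \<Rightarrow>
     (a*a' + b*c', a*b' + b*d', c*a' + d*c', c*b' + d*d'))"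

primrec cat_pow :: "int \<Rightarrow> int \<Rightarrow> nat \<Rightarrow> int \<times> int \<times> int \<times> int" where
  "cat_pow p q 0 = (1, 0, 0, 1)"
| "cat_pow p q (Suc n) = mat_mult2 (1, p, q, 1 + p * q) (cat_pow p q n)"

definition mat_cong_id :: "int \<times> int \<times> int \<times> int \<Rightarrow> int \<Rightarrow> bool" where
  "mat_cong_id M m = (case M of (a,b,c,d) \<Rightarrow>
     [a = 1] (mod m) \<and> [b = 0] (mod m) \<and> [c = 0] (mod m) \<and> [d = 1] (mod m))"

definition T :: "int \<Rightarrow> int \<Rightarrow> nat \<Rightarrow> nat" where
  "T p q e = (LEAST n. n \<ge> 1 \<and> mat_cong_id (cat_pow p q n) (2 ^ e))"

definition pair_cong :: "int \<times> int \<Rightarrow> int \<times> int \<Rightarrow> int \<Rightarrow> bool" where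
  "pair_cong v w m = ([fst v = fst w] (mod m) \<and> [snd v = snd w] (mod m))"

definition on_cycle :: "int \<Rightarrow> int \<Rightarrow> nat \<Rightarrow> nat \<Rightarrow> int \<times> int \<Rightarrow> bool" where
  "on_cycle p q e n v = (n \<ge> 1 \<and> pair_cong ((cat_map p q ^^ n) v) v (2 ^ e) \<and>
     (\<forall>k. 1 \<le> k \<and> k < n \<longrightarrow> \<not> pair_cong ((cat_map p q ^^ k) v) v (2 ^ e)))"

text \<open>G_n and H_n (Lucas sequences V_n(A,1), U_n(A,1) with A = pq+2),
  given by their integer recurrences.\<close>
fun Gseq :: "int \<Rightarrow> nat \<Rightarrow> int" where
  "Gseq A 0 = 2"
| "Gseq A (Suc 0) = A"
| "Gseq A (Suc (Suc n)) = A * Gseq A (Suc n) - Gseq A n"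

fun Hseq :: "int \<Rightarrow> nat \<Rightarrow> int" where
  "Hseq A 0 = 0"
| "Hseq A (Suc 0) = 1"
| "Hseq A (Suc (Suc n)) = A * Hseq A (Suc n) - Hseq A n"

definition G :: "int \<Rightarrow> int \<Rightarrow> nat \<Rightarrow> int" where "G p q n = Gseq (p * q + 2) n"
definition H :: "int \<Rightarrow> int \<Rightarrow> nat \<Rightarrow> int" where "H p q n = Hseq (p * q + 2) n"

definition T1 :: "int \<Rightarrow> int \<Rightarrow> nat" where
  "T1 p q = (if odd p \<and> odd q then 3 else if odd p \<or> odd q then 2 else 1)"

definition hhat :: "int \<Rightarrow> int \<Rightarrow> int" where
  "hhat p q = (if v2 p + v2 q = 0 then -1 else int (min (v2 p) (v2 q)))"

definition e_sh :: "int \<Rightarrow> int \<Rightarrow> int" where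
  "e_sh p q = int (v2 (H p q (T1 p q)))"

definition m0 :: "int \<Rightarrow> int \<Rightarrow> nat" where
  "m0 p q = (if \<not> [G p q (T1 p q) div 2 = 1] (mod 4) then 1 else 0)"

definition e_sg :: "int \<Rightarrow> int \<Rightarrow> int" where
  "e_sg p q = int (v2 (G p q (2 ^ m0 p q * T1 p q) div 2 - 1))"

definition x0 :: "int \<Rightarrow> int \<Rightarrow> int" where
  "x0 p q = (if e_sg p q < e_sh p q + int (m0 p q) + hhat p q
             then e_sh p q + int (m0 p q) + hhat p q - e_sg p q else 0)"

definition e_s :: "int \<Rightarrow> int \<Rightarrow> int" where
  "e_s p q = e_sh p q + int (m0 p q) + hhat p q + x0 p q"

text \<open>e_0, cases read in order; l_c is only used when T_c \<noteq> 1.\<close>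
definition e0 :: "int \<Rightarrow> int \<Rightarrow> nat \<Rightarrow> nat \<Rightarrow> int" where
  "e0 p q Tc lc = (if Tc = 1 then int (max (v2 p) (v2 q))
     else if lc = 0 \<and> T1 p q \<noteq> 1 then e_sg p q + 1
     else e_sg p q + 2 * int lc - 1)"

end

(*
  Let M = C^{T_c} and let v be a point that is not 0 mod 2 with M v = v mod 2^e.  If moreover
  M = I mod 2^k, multiplying (M - I) v = 0 mod 2^e by the adjugate of M - I shows
  2^{e+k} | det (M - I) = det M - tr M + 1 = 2 - tr M.

  For T_c = 1 this says 2^{e + min(e_p, e_q)} divides pq, so e <= max(e_p, e_q).
  For T_c = 2^l T_1 one has C^{T_c} = I mod 2^{l+1} and tr C^{T_c} = G_{T_c}, so
  e + l + 1 <= v_2(G_{2^l T_1} - 2).  By G_{2n} - 2 = (G_n - 2)(G_n + 2) and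
  G_{2^j T_1} = 2 mod 8 for j >= 1, this valuation grows by exactly 2 per doubling,
  and comparing with e_{s,g} bounds it by e_0 + l + 1 < e + l + 1.
*)

theory Submission
  imports Defs
begin

lemma mat_mult2_simps [simp]:
  "mat_mult2 (a, b, c, d) (a', b', c', d') = (a*a' + b*c', a*b' + b*d', c*a' + d*c', c*b' + d*d')"
  by (simp add: mat_mult2_def)

lemma mat_mult2_assoc: "mat_mult2 (mat_mult2 L M) N = mat_mult2 L (mat_mult2 M N)"
  by (cases L rule: prod_cases4; cases M rule: prod_cases4; cases N rule: prod_cases4)
    (simp add: algebra_simps)

definition mat_det2 :: "int \<times> int \<times> int \<times> int \<Rightarrow> int" where
  "mat_det2 M = (case M of (a, b, c, d) \<Rightarrow> a*d - b*c)"

definition mat_trace2 :: "int \<times> int \<times> int \<times> int \<Rightarrow> int" where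
  "mat_trace2 M = (case M of (a, b, c, d) \<Rightarrow> a + d)"

definition mat_apply2 :: "int \<times> int \<times> int \<times> int \<Rightarrow> int \<times> int \<Rightarrow> int \<times> int" where
  "mat_apply2 M v = (case M of (a, b, c, d) \<Rightarrow> (a * fst v + b * snd v, c * fst v + d * snd v))"

lemma mat_det2_mult: "mat_det2 (mat_mult2 M N) = mat_det2 M * mat_det2 N"
  by (cases M rule: prod_cases4; cases N rule: prod_cases4) (simp add: mat_det2_def algebra_simps)

lemma mat_trace2_square: "mat_trace2 (mat_mult2 M M) = mat_trace2 M ^ 2 - 2 * mat_det2 M"
  by (cases M rule: prod_cases4) (simp add: mat_trace2_def mat_det2_def power2_eq_square algebra_simps)

lemma cat_pow_add: "cat_pow p q (m + n) = mat_mult2 (cat_pow p q m) (cat_pow p q n)"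
proof (induction m)
  case 0
  show ?case by (cases "cat_pow p q n" rule: prod_cases4) simp
next
  case (Suc m)
  then show ?case by (simp add: mat_mult2_assoc)
qed

lemma mat_det2_cat_pow: "mat_det2 (cat_pow p q n) = 1"
proof (induction n)
  case (Suc n)
  have "mat_det2 (1, p, q, 1 + p*q) = 1"
    by (simp add: mat_det2_def algebra_simps)
  with Suc show ?case
    by (simp add: mat_det2_mult)
qed (simp add: mat_det2_def)

lemma mat_trace2_cat_pow_Suc_Suc:
  "mat_trace2 (cat_pow p q (Suc (Suc n)))
     = (p*q + 2) * mat_trace2 (cat_pow p q (Suc n)) - mat_trace2 (cat_pow p q n)"
  by (cases "cat_pow p q n" rule: prod_cases4) (simp add: mat_trace2_def algebra_simps)

lemma G_eq_mat_trace2: "G p q n = mat_trace2 (cat_pow p q n)"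
proof (induction n rule: induct_nat_012)
  case (ge2 n)
  then show ?case
    by (simp only: G_def Gseq.simps mat_trace2_cat_pow_Suc_Suc)
qed (simp_all add: G_def mat_trace2_def)

lemma G_double: "G p q (2 * n) = G p q n ^ 2 - 2"
  using mat_trace2_square[of "cat_pow p q n"]
  by (simp add: G_eq_mat_trace2 mat_det2_cat_pow mult_2 cat_pow_add)

lemma funpow_cat_map: "(cat_map p q ^^ n) v = mat_apply2 (cat_pow p q n) v"
proof (induction n)
  case 0
  show ?case by (simp add: mat_apply2_def)
next
  case (Suc n)
  then show ?case
    by (cases "cat_pow p q n" rule: prod_cases4) (simp add: mat_apply2_def cat_map_def algebra_simps)
qed

lemma mat_cong_id_iff_dvd:
  "mat_cong_id (a, b, c, d) n \<longleftrightarrow> n dvd a - 1 \<and> n dvd b \<and> n dvd c \<and> n dvd d - 1"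
  by (simp add: mat_cong_id_def cong_iff_dvd_diff)

lemma mat_cong_id_square:
  assumes "mat_cong_id M (2 * n)"
  shows "mat_cong_id (mat_mult2 M M) (4 * n)"
proof -
  obtain a b c d where M: "M = (a, b, c, d)"
    by (cases M rule: prod_cases4)
  from assms obtain \<alpha> \<beta> \<gamma> \<delta> where
    "a = 1 + 2*n*\<alpha>" "b = 2*n*\<beta>" "c = 2*n*\<gamma>" "d = 1 + 2*n*\<delta>"
    unfolding M mat_cong_id_iff_dvd by (metis dvdE add.commute diff_add_cancel)
  then have "a*a + b*c - 1 = 4*n * (\<alpha> + n*(\<alpha>*\<alpha> + \<beta>*\<gamma>))"
    and "a*b + b*d = 4*n * (\<beta> + n*(\<alpha>*\<beta> + \<beta>*\<delta>))"
    and "c*a + d*c = 4*n * (\<gamma> + n*(\<gamma>*\<alpha> + \<delta>*\<gamma>))"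
    and "c*b + d*d - 1 = 4*n * (\<delta> + n*(\<gamma>*\<beta> + \<delta>*\<delta>))"
    by (simp_all add: algebra_simps)
  then show ?thesis
    unfolding M mat_mult2_simps mat_cong_id_iff_dvd by (metis dvd_triv_left)
qed

lemma cat_pow_T1_cong_id: "mat_cong_id (cat_pow p q (T1 p q)) 2"
proof -
  consider "odd p" "odd q" | "odd p \<noteq> odd q" | "even p" "even q"
    by blast
  then show ?thesis
  proof cases
    case 1
    then show ?thesis
      by (auto simp: T1_def numeral_3_eq_3 mat_cong_id_iff_dvd algebra_simps)
  next
    case 2
    then show ?thesis
      by (auto simp: T1_def numeral_2_eq_2 mat_cong_id_iff_dvd algebra_simps)
  next
    case 3
    then show ?thesis
      by (simp add: T1_def mat_cong_id_iff_dvd)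
  qed
qed

lemma cat_pow_dyadic_cong_id: "mat_cong_id (cat_pow p q (2^l * T1 p q)) (2^(l+1))"
proof (induction l)
  case 0
  show ?case using cat_pow_T1_cong_id by simp
next
  case (Suc l)
  have "cat_pow p q (2^Suc l * T1 p q) = mat_mult2 (cat_pow p q (2^l * T1 p q)) (cat_pow p q (2^l * T1 p q))"
    by (metis cat_pow_add mult_2 mult.assoc power_Suc)
  with mat_cong_id_square[of _ "2^l"] Suc show ?case
    by simp
qed

lemma sq_dvd_det_minus_trace_of_cong_id:
  assumes "mat_cong_id M n"
  shows "n^2 dvd mat_det2 M - mat_trace2 M + 1"
proof -
  obtain a b c d where M: "M = (a, b, c, d)"
    by (cases M rule: prod_cases4)
  have "mat_det2 M - mat_trace2 M + 1 = (a - 1) * (d - 1) - b * c"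
    by (simp add: M mat_det2_def mat_trace2_def algebra_simps)
  with assms show ?thesis
    unfolding M mat_cong_id_iff_dvd power2_eq_square by (simp add: mult_dvd_mono)
qed

lemma prime_power_dvd_det_of_kernel:
  fixes r a b c d x y :: int
  assumes "prime r"
    and "r^k dvd a" "r^k dvd b" "r^k dvd c" "r^k dvd d"
    and "r^e dvd a*x + b*y" "r^e dvd c*x + d*y"
    and "\<not> r dvd x \<or> \<not> r dvd y"
  shows "r^(e+k) dvd a*d - b*c"
proof -
  have "(a*d - b*c) * x = d * (a*x + b*y) - b * (c*x + d*y)"
    and "(a*d - b*c) * y = a * (c*x + d*y) - c * (a*x + b*y)"
    by (simp_all add: algebra_simps)
  moreover have "r^(k+e) dvd d * (a*x + b*y) - b * (c*x + d*y)"
    and "r^(k+e) dvd a * (c*x + d*y) - c * (a*x + b*y)"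
    unfolding power_add by (intro dvd_diff mult_dvd_mono assms)+
  ultimately have "r^(e+k) dvd (a*d - b*c) * x" "r^(e+k) dvd (a*d - b*c) * y"
    by (simp_all add: add.commute)
  moreover from assms(1,8) have "coprime (r^(e+k)) x \<or> coprime (r^(e+k)) y"
    by (auto intro: prime_imp_coprime)
  ultimately show ?thesis
    using coprime_dvd_mult_left_iff by blast
qed

lemma prime_power_dvd_det_minus_trace_of_fixed:
  fixes r :: int
  assumes "prime r" "mat_cong_id M (r^k)" "pair_cong (mat_apply2 M v) v (r^e)"
    and "\<not> r dvd fst v \<or> \<not> r dvd snd v"
  shows "r^(e+k) dvd mat_det2 M - mat_trace2 M + 1"
proof -
  obtain a b c d where M: "M = (a, b, c, d)"
    by (cases M rule: prod_cases4)
  have "mat_det2 M - mat_trace2 M + 1 = (a - 1) * (d - 1) - b * c"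
    by (simp add: M mat_det2_def mat_trace2_def algebra_simps)
  moreover have "r^e dvd (a - 1) * fst v + b * snd v" "r^e dvd c * fst v + (d - 1) * snd v"
    using assms(3) by (simp_all add: M mat_apply2_def pair_cong_def cong_iff_dvd_diff algebra_simps)
  ultimately show ?thesis
    using prime_power_dvd_det_of_kernel[OF assms(1)] assms(2,4) by (simp add: M mat_cong_id_iff_dvd)
qed

lemma Gseq_less_Suc:
  assumes "2 < A"
  shows "Gseq A n < Gseq A (Suc n)"
proof -
  have "2 \<le> Gseq A n \<and> Gseq A n < Gseq A (Suc n)"
  proof (induction n)
    case (Suc n)
    have "3 * Gseq A (Suc n) \<le> A * Gseq A (Suc n)"
      using Suc assms by (intro mult_right_mono) auto
    moreover have "Gseq A (Suc (Suc n)) = A * Gseq A (Suc n) - Gseq A n"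
      by simp
    ultimately show ?case
      using Suc by linarith
  qed (use assms in simp)
  then show ?thesis ..
qed

lemma G_gt_two:
  assumes "0 < p*q" "0 < n"
  shows "2 < G p q n"
proof -
  have "strict_mono (Gseq (p*q + 2))"
    using Gseq_less_Suc assms(1) by (simp add: strict_mono_Suc_iff)
  then have "Gseq (p*q + 2) 0 < Gseq (p*q + 2) n"
    using assms(2) by (rule strict_monoD)
  then show ?thesis
    by (simp add: G_def)
qed

lemma v2_mult: "x \<noteq> 0 \<Longrightarrow> y \<noteq> 0 \<Longrightarrow> v2 (x*y) = v2 x + v2 y"
  unfolding v2_def by (rule prime_elem_multiplicity_mult_distrib) auto

lemma v2_geI: "2^n dvd x \<Longrightarrow> x \<noteq> 0 \<Longrightarrow> n \<le> v2 x"
  unfolding v2_def by (rule multiplicity_geI) auto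

lemma pow_v2_dvd: "2 ^ v2 x dvd x"
  unfolding v2_def by (rule multiplicity_dvd)

lemma v2_double: "x \<noteq> 0 \<Longrightarrow> v2 (2*x) = v2 x + 1"
  unfolding v2_def by (simp add: multiplicity_times_same)

lemma v2_eq_two: "[x = 4] (mod 8) \<Longrightarrow> v2 x = 2"
proof -
  assume "[x = 4] (mod 8)"
  then obtain w where "x - 4 = 8 * w"
    by (auto simp: cong_iff_dvd_diff)
  then have "x = 2^2 * (2*w + 1)"
    by simp
  then show ?thesis
    unfolding v2_def by (intro multiplicity_decomposeI[where x' = "2*w + 1"]) auto
qed

definition G_dyadic :: "int \<Rightarrow> int \<Rightarrow> nat \<Rightarrow> int" where
  "G_dyadic p q j = G p q (2^j * T1 p q)"

lemma G_dyadic_Suc_minus_two: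
  "G_dyadic p q (Suc j) - 2 = (G_dyadic p q j - 2) * (G_dyadic p q j + 2)"
proof -
  have "G_dyadic p q (Suc j) = G_dyadic p q j ^ 2 - 2"
    unfolding G_dyadic_def by (metis G_double mult.assoc power_Suc)
  then show ?thesis
    by (simp add: power2_eq_square algebra_simps)
qed

lemma G_dyadic_gt_two: "0 < p*q \<Longrightarrow> 2 < G_dyadic p q j"
  by (simp add: G_dyadic_def G_gt_two T1_def)

lemma G_dyadic_minus_two_dvd: "2^(2*j + 2) dvd G_dyadic p q j - 2"
proof -
  have "(2^(j+1))^2 dvd mat_det2 (cat_pow p q (2^j * T1 p q)) - mat_trace2 (cat_pow p q (2^j * T1 p q)) + 1"
    by (rule sq_dvd_det_minus_trace_of_cong_id[OF cat_pow_dyadic_cong_id])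
  moreover have "(2::int)^(2*j + 2) = (2^(j+1))^2"
    by (simp flip: power_mult add: algebra_simps)
  ultimately show ?thesis
    by (simp add: G_dyadic_def G_eq_mat_trace2 mat_det2_cat_pow dvd_diff_commute)
qed

lemma v2_G_dyadic_Suc:
  "0 < p*q \<Longrightarrow> v2 (G_dyadic p q (Suc j) - 2) = v2 (G_dyadic p q j - 2) + v2 (G_dyadic p q j + 2)"
  unfolding G_dyadic_Suc_minus_two using G_dyadic_gt_two[of p q j] by (intro v2_mult) auto

lemma v2_G_dyadic_plus_two:
  assumes "0 < j"
  shows "v2 (G_dyadic p q j + 2) = 2"
proof (rule v2_eq_two)
  have "(2::int)^3 dvd 2^(2*j + 2)"
    using assms by (intro le_imp_power_dvd) simp
  then have "8 dvd G_dyadic p q j + 2 - 4"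
    using G_dyadic_minus_two_dvd[of j p q] by (auto intro: dvd_trans)
  then show "[G_dyadic p q j + 2 = 4] (mod 8)"
    by (simp add: cong_iff_dvd_diff)
qed

lemma v2_G_dyadic_Suc_eq:
  "0 < p*q \<Longrightarrow> v2 (G_dyadic p q (Suc l) - 2) = v2 (G_dyadic p q 1 - 2) + 2*l"
  by (induction l) (simp_all add: v2_G_dyadic_Suc v2_G_dyadic_plus_two)

lemma e_sg_eq_v2_G_dyadic:
  assumes "0 < p*q"
  shows "e_sg p q + 1 = int (v2 (G_dyadic p q (m0 p q) - 2))"
proof -
  define g where "g = G_dyadic p q (m0 p q)"
  have "2 dvd g - 2"
    using G_dyadic_minus_two_dvd[of "m0 p q" p q] unfolding g_def
    by (rule dvd_trans[rotated]) simp
  then have "even g"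
    by simp
  then have "g - 2 = 2 * (g div 2 - 1)"
    by simp
  moreover have "g div 2 - 1 \<noteq> 0"
    using G_dyadic_gt_two[OF assms, of "m0 p q"] \<open>even g\<close> unfolding g_def by (auto elim: evenE)
  ultimately have "v2 (g - 2) = v2 (g div 2 - 1) + 1"
    by (metis v2_double)
  then show ?thesis
    by (simp add: e_sg_def G_dyadic_def g_def)
qed

lemma v2_G_dyadic_0_plus_two:
  assumes "m0 p q = 0"
  shows "v2 (G_dyadic p q 0 + 2) = 2"
proof (rule v2_eq_two)
  define g where "g = G_dyadic p q 0"
  have "2 dvd g - 2"
    using G_dyadic_minus_two_dvd[of 0 p q] unfolding g_def by (rule dvd_trans[rotated]) simp
  then obtain h where h: "g = 2 * h"
    by (auto elim: evenE)
  moreover have "G p q (T1 p q) div 2 = h"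
    using h by (simp add: g_def G_dyadic_def)
  with assms have "[h = 1] (mod 4)"
    by (simp add: m0_def split: if_splits)
  then obtain k where "h - 1 = 4 * k"
    by (auto simp: cong_iff_dvd_diff)
  then have "g + 2 - 4 = 8 * k"
    by (simp add: h)
  then show "[g + 2 = 4] (mod 8)"
    by (simp add: cong_iff_dvd_diff)
qed

lemma v2_G_dyadic_le_e0:
  assumes "0 < p*q" "Tc = 2^lc * T1 p q" "Tc \<noteq> 1"
  shows "int (v2 (G_dyadic p q lc - 2)) \<le> e0 p q Tc lc + int lc + 1"
proof -
  let ?u = "\<lambda>j. int (v2 (G_dyadic p q j - 2))"
  have u1: "?u 1 = ?u 0 + int (v2 (G_dyadic p q 0 + 2))"
    using v2_G_dyadic_Suc[OF assms(1), of 0] by simp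
  have e_sg: "e_sg p q + 1 = ?u (m0 p q)"
    using e_sg_eq_v2_G_dyadic[OF assms(1)] .
  have m0: "m0 p q = 0 \<or> m0 p q = 1"
    by (simp add: m0_def)
  show ?thesis
  proof (cases lc)
    case 0
    with assms(2,3) have "e0 p q Tc lc = e_sg p q + 1"
      by (simp add: e0_def)
    with e_sg m0 u1 0 show ?thesis
      by auto
  next
    case (Suc l)
    with assms(3) have "e0 p q Tc lc = e_sg p q + 2 * int l + 1"
      by (simp add: e0_def)
    moreover have "?u lc = ?u 1 + 2 * int l"
      using v2_G_dyadic_Suc_eq[OF assms(1), of l] Suc by simp
    ultimately show ?thesis
      using e_sg m0 u1 v2_G_dyadic_0_plus_two[of p q] Suc by auto
  qed
qed

lemma cat_periodic_point_le_v2_G_dyadic: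
  assumes "0 < p*q" "pair_cong (mat_apply2 (cat_pow p q (2^l * T1 p q)) v) v (2^e)"
    and "odd (fst v) \<or> odd (snd v)"
  shows "e + l + 1 \<le> v2 (G_dyadic p q l - 2)"
proof (rule v2_geI)
  have "2^(e + (l+1)) dvd mat_det2 (cat_pow p q (2^l * T1 p q)) - mat_trace2 (cat_pow p q (2^l * T1 p q)) + 1"
    using assms(2,3) by (intro prime_power_dvd_det_minus_trace_of_fixed cat_pow_dyadic_cong_id) auto
  then show "2^(e + l + 1) dvd G_dyadic p q l - 2"
    by (simp add: G_dyadic_def G_eq_mat_trace2 mat_det2_cat_pow dvd_diff_commute)
  show "G_dyadic p q l - 2 \<noteq> 0"
    using G_dyadic_gt_two[OF assms(1)] by (simp add: less_le)
qed

lemma cat_fixed_point_le_max_v2: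
  assumes "p \<noteq> 0" "q \<noteq> 0" "pair_cong (mat_apply2 (cat_pow p q 1) v) v (2^e)"
    and "odd (fst v) \<or> odd (snd v)"
  shows "e \<le> max (v2 p) (v2 q)"
proof -
  define k where "k = min (v2 p) (v2 q)"
  have "(2::int)^k dvd p" "(2::int)^k dvd q"
    unfolding k_def by (meson dvd_trans le_imp_power_dvd min.cobounded1 min.cobounded2 pow_v2_dvd)+
  then have "mat_cong_id (cat_pow p q 1) (2^k)"
    by (simp add: mat_cong_id_iff_dvd)
  then have "2^(e+k) dvd mat_det2 (cat_pow p q 1) - mat_trace2 (cat_pow p q 1) + 1"
    using assms(3,4) by (intro prime_power_dvd_det_minus_trace_of_fixed) auto
  then have "2^(e+k) dvd p * q"
    by (simp add: mat_det2_def mat_trace2_def algebra_simps)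
  then have "e + k \<le> v2 p + v2 q"
    using assms(1,2) by (simp add: v2_geI flip: v2_mult)
  then show ?thesis
    by (simp add: k_def)
qed

theorem lemma8:
  fixes p q x y :: int and s lc Tc e :: nat
  assumes "p > 0" and "q > 0"
    and "T p q (nat (e_s p q)) = 2 ^ s * T1 p q"
    and "Tc = 1 \<or> (Tc = 2 ^ lc * T1 p q \<and> lc \<le> s + 1)"
    and "int e > e0 p q Tc lc"
    and "on_cycle p q e Tc (x, y)"
  shows "[x = 0] (mod 2) \<and> [y = 0] (mod 2)"
proof (rule ccontr)
  \<comment> \<open>Only the periodicity of (x, y) is used.\<close>
  assume "\<not> ([x = 0] (mod 2) \<and> [y = 0] (mod 2))"
  then have primitive: "odd (fst (x, y)) \<or> odd (snd (x, y))"
    by (auto simp: cong_0_iff)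
  have periodic: "pair_cong (mat_apply2 (cat_pow p q Tc) (x, y)) (x, y) (2^e)"
    using assms(6) by (simp add: on_cycle_def funpow_cat_map)
  have pq: "0 < p*q"
    using assms(1,2) by simp
  consider "Tc = 1" | "Tc \<noteq> 1" "Tc = 2^lc * T1 p q"
    using assms(4) by blast
  then show False
  proof cases
    case 1
    with periodic primitive assms(1,2) have "e \<le> max (v2 p) (v2 q)"
      by (intro cat_fixed_point_le_max_v2) auto
    with assms(5) 1 show False
      by (simp add: e0_def le_max_iff_disj)
  next
    case 2
    with periodic primitive pq have "e + lc + 1 \<le> v2 (G_dyadic p q lc - 2)"
      by (intro cat_periodic_point_le_v2_G_dyadic) auto
    with v2_G_dyadic_le_e0[OF pq 2(2,1)] assms(5) show False
      by simp
  qed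
qed

end
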